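(* The number of zero-normalized $\Gamma_{m,n}$-semimodules $\Delta$ satisfying $\widehat{\Delta}=\Delta$ equals $\binom{\lfloor m/2\rfloor+\lfloor n/2\rfloor}{\lfloor m/2\rfloor}$.
   Context: Let $m,n$ be coprime positive integers and $\Gamma_{m,n}=\{am+bn:a,b\in\mathbb{Z}_{\ge0}\}$. A $\Gamma_{m,n}$-semimodule is $\Delta\subset\mathbb{Z}_{\ge0}$ with $\Delta+\Gamma_{m,n}\subset\Delta$; zero-normalized means $\min\Delta=0$. Its dual is $\Delta^*=\{\varphi\in\mathbb{Z}:\varphi+\Delta\subset\Gamma_{m,n}\}$ and $\widehat\Delta=\Delta^*-\min\Delta^*$ (equivalently $\max(\mathbb{Z}\setminus\Delta)-(\mathbb{Z}\setminus\Delta)$). *)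

theory Defs
  imports Main
begin

definition Gamma :: "nat \<Rightarrow> nat \<Rightarrow> int set" where
  "Gamma m n = {int (a * m + b * n) | a b. True}"

definition is_semimodule :: "nat \<Rightarrow> nat \<Rightarrow> int set \<Rightarrow> bool" where
  "is_semimodule m n D \<longleftrightarrow> D \<subseteq> {0..} \<and> (\<forall>d\<in>D. \<forall>g\<in>Gamma m n. d + g \<in> D)"

definition zero_normalized :: "int set \<Rightarrow> bool" where
  "zero_normalized D \<longleftrightarrow> 0 \<in> D \<and> (\<forall>d\<in>D. 0 \<le> d)"

definition dual :: "nat \<Rightarrow> nat \<Rightarrow> int set \<Rightarrow> int set" where
  "dual m n D = {\<phi>. \<forall>d\<in>D. \<phi> + d \<in> Gamma m n}"

definition hat :: "nat \<Rightarrow> nat \<Rightarrow> int set \<Rightarrow> int set" where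
  "hat m n D = (\<lambda>x. x - Inf (dual m n D)) ` dual m n D"

end

theory Submission
  imports Defs "HOL-Library.Multiset"
begin

text \<open>
  Let \<open>F = mn - m - n\<close> be the Frobenius number. Since \<open>\<Gamma>\<close> is symmetric (\<open>x \<in> \<Gamma>\<close> iff \<open>F - x \<notin> \<Gamma>\<close>),
  the dual of a semimodule \<open>D\<close> is \<open>{\<phi>. F - \<phi> \<notin> D}\<close>, so \<open>hat D = D\<close> says exactly that \<open>D\<close> is
  antisymmetric about some (necessarily odd) centre \<open>K\<close>: \<open>x \<in> D\<close> iff \<open>K - x \<notin> D\<close>.
  Translating by \<open>(K\<^sub>0 - K) / 2\<close> identifies the self-dual zero-normalized semimodules with the subsets
  of \<open>\<int>\<close> closed under adding \<open>m\<close> and \<open>n\<close> and antisymmetric about one fixed odd centre \<open>K\<^sub>0\<close>.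
  Writing \<open>x = i n + j m\<close>, such a set is \<open>{i n + j m. j \<ge> B i}\<close> for a non-increasing boundary \<open>B\<close>
  with \<open>B (i + m) = B i - n\<close> and \<open>B i + B (-1 - i) = n mod 2\<close>. The boundary is determined by its
  values on \<open>0 \<le> i < \<lfloor>m/2\<rfloor>\<close>, which form an arbitrary non-increasing sequence with values in
  \<open>[-\<lfloor>n/2\<rfloor>, 0]\<close>; there are \<open>(\<lfloor>m/2\<rfloor> + \<lfloor>n/2\<rfloor> choose \<lfloor>m/2\<rfloor>)\<close> of them.
\<close>

section \<open>Linear combinations of coprime integers\<close>

lemma coprime_lincomb_window:
  fixes M N x L :: int
  assumes "coprime M N" "0 < M"
  obtains i j where "L \<le> i" "i < L + M" "x = i*N + j*M"
proof -
  obtain u v where "u*M + v*N = gcd M N"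
    using bezout_int by blast
  with assms(1) have uv: "u*M + v*N = 1"
    by simp
  define i where "i = L + (x*v - L) mod M"
  define t where "t = (x*v - L) div M"
  have xv: "x*v = i + t*M"
    unfolding i_def t_def using mod_div_mult_eq[of "x*v - L" M] by linarith
  have "x = x*(u*M + v*N)"
    using uv by simp
  also have "\<dots> = (x*v)*N + (x*u)*M"
    by (simp add: algebra_simps)
  also have "\<dots> = i*N + (x*u + t*N)*M"
    unfolding xv by (simp add: algebra_simps)
  finally have "x = i*N + (x*u + t*N)*M" .
  moreover have "L \<le> i" "i < L + M"
    unfolding i_def using assms(2) by auto
  ultimately show thesis
    using that by blast
qed

lemma coprime_lincomb_eq:
  fixes M N :: int
  assumes "coprime M N" "M \<noteq> 0" and "i*N + j*M = i'*N + j'*M"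
  obtains t where "i' = i + t*M" "j' = j - t*N"
proof -
  have eq: "(i' - i)*N = (j - j')*M"
    using assms(3) by (simp add: algebra_simps)
  then have "M dvd (i' - i)*N"
    by simp
  then obtain t where t: "i' - i = M*t"
    using assms(1) by (auto simp: coprime_dvd_mult_left_iff elim: dvdE)
  then have "M*(t*N) = M*(j - j')"
    using eq by (simp add: algebra_simps)
  then have "t*N = j - j'"
    using assms(2) by simp
  then show thesis
    using t that[of t] by (simp add: algebra_simps)
qed

lemma coprime_lincomb_unique:
  fixes M N :: int
  assumes "coprime M N" "0 < M" and "i*N + j*M = i'*N + j'*M"
    and "L \<le> i" "i < L + M" "L \<le> i'" "i' < L + M"
  shows "i' = i \<and> j' = j"
proof -
  have "M \<noteq> 0"
    using assms(2) by simp
  then obtain t where t: "i' = i + t*M" "j' = j - t*N"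
    using coprime_lincomb_eq[OF assms(1) _ assms(3)] by blast
  have "t = 0"
  proof (rule ccontr)
    assume "t \<noteq> 0"
    then have "M \<le> \<bar>t*M\<bar>"
      using assms(2) by (simp add: abs_mult)
    with t assms(4-7) show False
      by auto
  qed
  with t show ?thesis
    by simp
qed

lemma mem_Gamma_iff:
  "x \<in> Gamma m n \<longleftrightarrow> (\<exists>a b. 0 \<le> a \<and> 0 \<le> b \<and> x = a * int m + b * int n)"
proof
  assume "x \<in> Gamma m n"
  then obtain a b where "x = int (a*m + b*n)"
    unfolding Gamma_def by auto
  then show "\<exists>a b. 0 \<le> a \<and> 0 \<le> b \<and> x = a * int m + b * int n"
    by (intro exI[of _ "int a"] exI[of _ "int b"]) simp
next
  assume "\<exists>a b. 0 \<le> a \<and> 0 \<le> b \<and> x = a * int m + b * int n"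
  then obtain a b where "0 \<le> a" "0 \<le> b" "x = a * int m + b * int n"
    by blast
  then have "x = int (nat a * m + nat b * n)"
    by simp
  then show "x \<in> Gamma m n"
    unfolding Gamma_def by blast
qed

lemma zero_mem_Gamma: "0 \<in> Gamma m n"
  unfolding mem_Gamma_iff by (intro exI[of _ 0]) simp

lemma m_mem_Gamma: "int m \<in> Gamma m n"
  unfolding mem_Gamma_iff by (intro exI[of _ 1] exI[of _ 0]) simp

lemma n_mem_Gamma: "int n \<in> Gamma m n"
  unfolding mem_Gamma_iff by (intro exI[of _ 0] exI[of _ 1]) simp

lemma add_Gamma_closed:
  assumes "\<And>x. x \<in> E \<Longrightarrow> x + int m \<in> E" "\<And>x. x \<in> E \<Longrightarrow> x + int n \<in> E"
    and "x \<in> E" "g \<in> Gamma m n"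
  shows "x + g \<in> E"
proof -
  have iterate: "y + int (k * d) \<in> E"
    if step: "\<And>x. x \<in> E \<Longrightarrow> x + int d \<in> E" and "y \<in> E" for y k d
  proof (induction k)
    case (Suc k)
    then have "(y + int (k * d)) + int d \<in> E"
      by (rule step)
    then show ?case
      by (simp add: algebra_simps)
  qed (use \<open>y \<in> E\<close> in simp)
  obtain a b where "g = int (a*m + b*n)"
    using assms(4) unfolding Gamma_def by auto
  then have eq: "x + g = (x + int (b*n)) + int (a*m)"
    by simp
  have "x + int (b*n) \<in> E"
    using iterate[OF assms(2) assms(3)] .
  then have "(x + int (b*n)) + int (a*m) \<in> E"
    using iterate[OF assms(1)] by blast
  then show ?thesis
    unfolding eq .
qed

definition translate :: "int \<Rightarrow> int set \<Rightarrow> int set" where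
  "translate t D = (\<lambda>x. x + t) ` D"

lemma mem_translate_iff [simp]: "x \<in> translate t D \<longleftrightarrow> x - t \<in> D"
  unfolding translate_def by (auto intro: rev_image_eqI)

lemma translate_translate [simp]: "translate s (translate t D) = translate (s + t) D"
  by (simp add: set_eq_iff diff_diff_eq)

lemma translate_0 [simp]: "translate 0 D = D"
  by (simp add: set_eq_iff)

definition antisym_about :: "int \<Rightarrow> int set \<Rightarrow> bool" where
  "antisym_about K D \<longleftrightarrow> (\<forall>x. x \<in> D \<longleftrightarrow> K - x \<notin> D)"

lemma antisym_about_odd:
  assumes "antisym_about K D"
  shows "odd K"
proof
  assume "even K"
  then obtain h where "K = 2*h"
    by auto
  then have "K - h = h"
    by simp
  then show False
    using assms unfolding antisym_about_def by metis
qed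

lemma antisym_about_translate:
  assumes "antisym_about K D"
  shows "antisym_about (K + 2*t) (translate t D)"
  unfolding antisym_about_def mem_translate_iff
proof
  fix x
  have "x - t \<in> D \<longleftrightarrow> K - (x - t) \<notin> D"
    using assms unfolding antisym_about_def by blast
  moreover have "K + 2*t - x - t = K - (x - t)"
    by simp
  ultimately show "x - t \<in> D \<longleftrightarrow> K + 2*t - x - t \<notin> D"
    by metis
qed

lemma int_Inf_mem:
  fixes X :: "int set"
  assumes "X \<noteq> {}" "bdd_below X"
  shows "Inf X \<in> X"
proof (rule ccontr)
  assume "Inf X \<notin> X"
  then have "Inf X + 1 \<le> y" if "y \<in> X" for y
  proof -
    have "Inf X \<le> y" "Inf X \<noteq> y"
      using cInf_lower[OF that assms(2)] that \<open>Inf X \<notin> X\<close> by auto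
    then show ?thesis
      by simp
  qed
  then have "Inf X + 1 \<le> Inf X"
    using assms(1) by (intro cInf_greatest) auto
  then show False
    by simp
qed

lemma upward_closed_threshold:
  fixes P :: "int \<Rightarrow> bool" and r :: nat
  assumes step: "\<And>j. P j \<Longrightarrow> P (j + 1)" and "P 0" and "\<not> P (- int r - 1)"
  shows "P j \<longleftrightarrow> - int (card {k \<in> {- int r..-1}. P k}) \<le> j"
proof -
  have up: "k \<le> k' \<Longrightarrow> P k \<Longrightarrow> P k'" for k k'
  proof (induction k' rule: int_ge_induct)
    case (step i)
    then show ?case
      using assms(1) by blast
  qed
  define S where "S = {k \<in> {- int r..0}. P k}"
  define t where "t = Min S"
  have "finite S"
    unfolding S_def by (rule finite_subset[of _ "{- int r..0}"]) auto
  moreover have "0 \<in> S"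
    using \<open>P 0\<close> by (simp add: S_def)
  ultimately have "t \<in> S"
    unfolding t_def by (metis Min_in empty_iff)
  have t_le: "t \<le> k" if "k \<in> S" for k
    unfolding t_def using \<open>finite S\<close> that by simp
  have P_iff: "P k \<longleftrightarrow> t \<le> k" for k
  proof
    assume "P k"
    show "t \<le> k"
    proof (cases "- int r \<le> k")
      case True
      show ?thesis
      proof (rule ccontr)
        assume "\<not> t \<le> k"
        then have "k \<in> S" using True \<open>P k\<close> \<open>t \<in> S\<close> by (simp add: S_def)
        then show False using t_le \<open>\<not> t \<le> k\<close> by blast
      qed
    next
      case False
      then have "P (- int r - 1)"
        using up[of k "- int r - 1"] \<open>P k\<close> by simp
      then show ?thesis
        using assms(3) by simp
    qed
  next
    assume "t \<le> k"
    then show "P k"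
      using up[of t k] \<open>t \<in> S\<close> by (simp add: S_def)
  qed
  have "t \<le> 0" "- int r \<le> t"
    using \<open>t \<in> S\<close> by (simp_all add: S_def)
  have "{k \<in> {- int r..-1}. P k} = {t..-1}"
    unfolding P_iff using \<open>- int r \<le> t\<close> by auto
  then have "card {k \<in> {- int r..-1}. P k} = nat (- t)"
    by simp
  then show ?thesis
    unfolding P_iff using \<open>t \<le> 0\<close> by linarith
qed

definition bounded_sorted_lists :: "nat \<Rightarrow> nat \<Rightarrow> nat list set" where
  "bounded_sorted_lists k r = {xs. length xs = k \<and> sorted xs \<and> set xs \<subseteq> {..r}}"

lemma card_bounded_sorted_lists: "card (bounded_sorted_lists k r) = (k + r) choose k"
proof -
  have length_sorted: "length (sorted_list_of_multiset X) = size X" for X :: "nat multiset"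
    by (metis mset_sorted_list_of_multiset size_mset)
  have "bij_betw mset (bounded_sorted_lists k r) (multisets_of_size {..r} k)"
  proof (rule bij_betw_byWitness[where f' = sorted_list_of_multiset])
    show "\<forall>xs\<in>bounded_sorted_lists k r. sorted_list_of_multiset (mset xs) = xs"
      by (simp add: bounded_sorted_lists_def sorted_sort_id)
    show "\<forall>X\<in>multisets_of_size {..r} k. mset (sorted_list_of_multiset X) = X"
      by simp
    show "mset ` bounded_sorted_lists k r \<subseteq> multisets_of_size {..r} k"
      by (auto simp: bounded_sorted_lists_def multisets_of_size_def)
    show "sorted_list_of_multiset ` multisets_of_size {..r} k \<subseteq> bounded_sorted_lists k r"
      by (auto simp: bounded_sorted_lists_def multisets_of_size_def length_sorted)
  qed
  then have "card (bounded_sorted_lists k r) = card (multisets_of_size {..r} k)"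
    by (rule bij_betw_same_card)
  also have "\<dots> = (k + r) choose k"
    by (simp add: card_multisets_of_size add.commute)
  finally show ?thesis .
qed

section \<open>Self-dual semimodules as antisymmetric sets\<close>

locale coprime_gens =
  fixes m n :: nat
  assumes coprime_mn: "coprime m n" and m_pos: "0 < m" and n_pos: "0 < n"
begin

abbreviation M :: int where "M \<equiv> int m"
abbreviation N :: int where "N \<equiv> int n"
abbreviation frobenius :: int where "frobenius \<equiv> M*N - M - N"

lemma coprime_MN: "coprime M N"
  using coprime_mn by simp

lemma M_pos: "0 < M"
  using m_pos by simp

lemma N_pos: "0 < N"
  using n_pos by simp

lemma lincomb_mem_Gamma_iff:
  assumes "0 \<le> i" "i < M"
  shows "i*N + j*M \<in> Gamma m n \<longleftrightarrow> 0 \<le> j"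
proof
  assume "0 \<le> j"
  with assms show "i*N + j*M \<in> Gamma m n"
    unfolding mem_Gamma_iff by (intro exI[of _ j] exI[of _ i]) simp
next
  assume "i*N + j*M \<in> Gamma m n"
  then obtain a b where ab: "0 \<le> a" "0 \<le> b" "i*N + j*M = a*M + b*N"
    unfolding mem_Gamma_iff by blast
  have "(b mod M)*N + (a + (b div M)*N)*M = a*M + (b mod M + (b div M)*M)*N"
    by (simp only: algebra_simps)
  also have "\<dots> = i*N + j*M"
    by (simp only: mod_div_mult_eq ab(3))
  finally have "i*N + j*M = (b mod M)*N + (a + (b div M)*N)*M" ..
  then have "j = a + (b div M)*N"
    using coprime_lincomb_unique[OF coprime_MN M_pos, of i j "b mod M" _ 0] assms M_pos by simp
  moreover have "0 \<le> b div M"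
    using ab(2) M_pos by (simp add: pos_imp_zdiv_nonneg_iff)
  ultimately show "0 \<le> j"
    using ab(1) N_pos by simp
qed

lemma Gamma_symmetric: "x \<in> Gamma m n \<longleftrightarrow> frobenius - x \<notin> Gamma m n"
proof -
  obtain i j where ij: "0 \<le> i" "i < M" "x = i*N + j*M"
    using coprime_lincomb_window[OF coprime_MN M_pos, where L = 0] by auto
  have "frobenius - x = (M - 1 - i)*N + (-1 - j)*M"
    using ij(3) by (simp add: algebra_simps)
  moreover have "0 \<le> M - 1 - i" "M - 1 - i < M"
    using ij by auto
  ultimately show ?thesis
    using lincomb_mem_Gamma_iff ij by auto
qed

lemma frobenius_not_in_Gamma: "frobenius \<notin> Gamma m n"
  using Gamma_symmetric[of 0] zero_mem_Gamma by simp

lemma mem_Gamma_if_gt_frobenius: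
  assumes "frobenius < x"
  shows "x \<in> Gamma m n"
proof -
  obtain i j where ij: "0 \<le> i" "i < M" "x = i*N + j*M"
    using coprime_lincomb_window[OF coprime_MN M_pos, where L = 0] by auto
  have "0 \<le> j"
  proof (rule ccontr)
    assume "\<not> 0 \<le> j"
    then have "j*M \<le> -1*M" "i*N \<le> (M - 1)*N"
      using ij M_pos N_pos by (intro mult_right_mono; simp)+
    then have "x \<le> frobenius"
      using ij(3) by (simp add: algebra_simps)
    with assms show False
      by simp
  qed
  then show ?thesis
    using lincomb_mem_Gamma_iff ij by simp
qed

lemma dual_eq:
  assumes "is_semimodule m n D"
  shows "dual m n D = {\<phi>. frobenius - \<phi> \<notin> D}"
proof (intro set_eqI iffI)
  fix \<phi> assume "\<phi> \<in> dual m n D"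
  show "\<phi> \<in> {\<phi>. frobenius - \<phi> \<notin> D}"
  proof (intro CollectI notI)
    assume "frobenius - \<phi> \<in> D"
    with \<open>\<phi> \<in> dual m n D\<close> have "\<phi> + (frobenius - \<phi>) \<in> Gamma m n"
      unfolding dual_def by blast
    with frobenius_not_in_Gamma show False
      by (metis add.commute diff_add_cancel)
  qed
next
  fix \<phi> assume "\<phi> \<in> {\<phi>. frobenius - \<phi> \<notin> D}"
  then have notin: "frobenius - \<phi> \<notin> D"
    by simp
  show "\<phi> \<in> dual m n D"
    unfolding dual_def
  proof (intro CollectI ballI)
    fix d assume "d \<in> D"
    show "\<phi> + d \<in> Gamma m n"
    proof (rule ccontr)
      assume "\<phi> + d \<notin> Gamma m n"
      then have "d + (frobenius - (\<phi> + d)) \<in> D"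
        using assms \<open>d \<in> D\<close> Gamma_symmetric unfolding is_semimodule_def by blast
      with notin show False
        by (simp add: algebra_simps)
    qed
  qed
qed

definition centre :: "int set \<Rightarrow> int" where
  "centre D = frobenius - Inf (dual m n D)"

lemma hat_eq:
  assumes "is_semimodule m n D"
  shows "hat m n D = {x. centre D - x \<notin> D}"
proof -
  have "hat m n D = translate (- Inf (dual m n D)) (dual m n D)"
    unfolding hat_def translate_def by simp
  then show ?thesis
    using dual_eq[OF assms] by (auto simp: centre_def algebra_simps)
qed

lemma hat_eq_self_iff:
  assumes "is_semimodule m n D"
  shows "hat m n D = D \<longleftrightarrow> antisym_about (centre D) D"
  unfolding hat_eq[OF assms] antisym_about_def by blast

lemma centre_eq:
  assumes "is_semimodule m n D" "zero_normalized D" "antisym_about K D"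
  shows "centre D = K"
proof -
  have dual_iff: "\<phi> \<in> dual m n D \<longleftrightarrow> \<phi> - (frobenius - K) \<in> D" for \<phi>
  proof -
    have "K - (frobenius - \<phi>) \<in> D \<longleftrightarrow> frobenius - \<phi> \<notin> D"
      using assms(3) unfolding antisym_about_def by (metis diff_diff_cancel)
    then show ?thesis
      unfolding dual_eq[OF assms(1)] by (simp add: algebra_simps)
  qed
  have "Inf (dual m n D) = frobenius - K"
    by (rule cInf_eq_minimum) (use assms(2) in \<open>auto simp: dual_iff zero_normalized_def\<close>)
  then show ?thesis
    unfolding centre_def by simp
qed

definition selfdual_semimodules :: "int set set" where
  "selfdual_semimodules = {D. is_semimodule m n D \<and> zero_normalized D \<and> hat m n D = D}"

definition antisym_modules :: "int \<Rightarrow> int set set" where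
  "antisym_modules K = {E. (\<forall>x\<in>E. x + M \<in> E) \<and> (\<forall>x\<in>E. x + N \<in> E) \<and> antisym_about K E}"

lemma translate_selfdual_mem_antisym_modules:
  assumes "D \<in> selfdual_semimodules" "odd K"
  shows "translate ((K - centre D) div 2) D \<in> antisym_modules K"
proof -
  have D: "is_semimodule m n D" "antisym_about (centre D) D"
    using assms(1) hat_eq_self_iff unfolding selfdual_semimodules_def by auto
  have "centre D + 2 * ((K - centre D) div 2) = K"
    using antisym_about_odd[OF D(2)] assms(2) by presburger
  then have "antisym_about K (translate ((K - centre D) div 2) D)"
    using antisym_about_translate[OF D(2)] by metis
  moreover have "x + g \<in> translate t D" if "x \<in> translate t D" "g \<in> Gamma m n" for x g t
    using D(1) that unfolding is_semimodule_def mem_translate_iff by (metis diff_add_eq)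
  ultimately show ?thesis
    unfolding antisym_modules_def using m_mem_Gamma n_mem_Gamma by blast
qed

lemma antisym_modules_Inf:
  assumes "E \<in> antisym_modules K"
  shows "Inf E \<in> E" "\<And>x. x \<in> E \<Longrightarrow> Inf E \<le> x"
proof -
  have E: "\<And>x. x \<in> E \<Longrightarrow> x + M \<in> E" "\<And>x. x \<in> E \<Longrightarrow> x + N \<in> E" "antisym_about K E"
    using assms unfolding antisym_modules_def by auto
  have "E \<noteq> {}"
    using E(3) unfolding antisym_about_def by blast
  have "K - frobenius \<le> 2*y" if "y \<in> E" for y
  proof (rule ccontr)
    assume "\<not> K - frobenius \<le> 2*y"
    then have "K - 2*y \<in> Gamma m n"
      by (intro mem_Gamma_if_gt_frobenius) simp
    then have "y + (K - 2*y) \<in> E"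
      using add_Gamma_closed[OF E(1) E(2) \<open>y \<in> E\<close>] by blast
    then have "K - y \<in> E"
      by simp
    then show False
      using E(3) that unfolding antisym_about_def by blast
  qed
  then have "bdd_below E"
    by (intro bdd_belowI[of _ "- \<bar>K - frobenius\<bar>"]) fastforce
  then show "Inf E \<in> E" "\<And>x. x \<in> E \<Longrightarrow> Inf E \<le> x"
    using int_Inf_mem[OF \<open>E \<noteq> {}\<close>] cInf_lower by auto
qed

lemma normalize_antisym_module:
  assumes "E \<in> antisym_modules K"
  shows "translate (- Inf E) E \<in> selfdual_semimodules"
    and "centre (translate (- Inf E) E) = K - 2 * Inf E"
proof -
  let ?D = "translate (- Inf E) E"
  have E: "\<And>x. x \<in> E \<Longrightarrow> x + M \<in> E" "\<And>x. x \<in> E \<Longrightarrow> x + N \<in> E" "antisym_about K E"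
    using assms unfolding antisym_modules_def by auto
  have "is_semimodule m n ?D"
    unfolding is_semimodule_def
    using add_Gamma_closed[OF E(1,2)] antisym_modules_Inf(2)[OF assms]
    by (fastforce simp: algebra_simps)
  moreover have "zero_normalized ?D"
    unfolding zero_normalized_def using antisym_modules_Inf[OF assms] by fastforce
  moreover have "antisym_about (K - 2 * Inf E) ?D"
    using antisym_about_translate[OF E(3), of "- Inf E"] by simp
  ultimately show "centre ?D = K - 2 * Inf E" "?D \<in> selfdual_semimodules"
    using centre_eq hat_eq_self_iff unfolding selfdual_semimodules_def by auto
qed

lemma bij_betw_selfdual_antisym_modules:
  assumes "odd K"
  shows "bij_betw (\<lambda>D. translate ((K - centre D) div 2) D) selfdual_semimodules (antisym_modules K)"
proof (rule bij_betw_byWitness[where f' = "\<lambda>E. translate (- Inf E) E"], goal_cases)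
  case 1
  have "Inf (translate t D) = t" if "D \<in> selfdual_semimodules" for D t
    using that by (intro cInf_eq_minimum) (auto simp: selfdual_semimodules_def zero_normalized_def)
  then show ?case
    by simp
next
  case 2
  show ?case
    using normalize_antisym_module(2) by simp
next
  case 3
  show ?case
    using translate_selfdual_mem_antisym_modules assms by blast
next
  case 4
  show ?case
    using normalize_antisym_module(1) by blast
qed

section \<open>Antisymmetric sets as boundary functions\<close>

definition p :: nat where "p = m div 2"
definition q :: nat where "q = n div 2"

lemma M_halves: "M = 2 * int p \<or> M = 2 * int p + 1"
  unfolding p_def by presburger

lemma N_halves: "N = 2 * int q \<or> N = 2 * int q + 1"
  unfolding q_def by presburger

text \<open>
  This centre makes the reflection \<open>x \<mapsto> K\<^sub>0 - x\<close> send \<open>i N + j M\<close> to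
  \<open>(-1 - i) N + (N - 2q - 1 - j) M\<close>, so that column \<open>i\<close> is mirrored onto column \<open>-1 - i\<close>.
\<close>

definition standard_centre :: int where
  "standard_centre = (N - 2 * int q - 1) * M - N"

lemma standard_centre_odd: "odd standard_centre"
proof (cases "even n")
  case True
  have "odd m"
  proof
    assume "even m"
    then have "is_unit (2::nat)"
      using coprime_common_divisor[OF coprime_mn] True by blast
    then show False
      by simp
  qed
  moreover have "N - 2 * int q = 0"
    using True unfolding q_def by auto
  ultimately show ?thesis
    using True unfolding standard_centre_def by simp
next
  case False
  then have "N - 2 * int q = 1"
    unfolding q_def by presburger
  with False show ?thesis
    unfolding standard_centre_def by simp
qed

text \<open>
  The boundary on the window \<open>-p \<le> w < M - p\<close> of columns: on \<open>[0, p)\<close> it is read off the list,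
  on \<open>[-p, 0)\<close> it is forced by the reflection \<open>w \<mapsto> -1 - w\<close>, and on the self-mirrored column
  \<open>p\<close> (present only for odd \<open>m\<close>) it is forced to be \<open>-q\<close>.
\<close>

definition boundary0 :: "nat list \<Rightarrow> int \<Rightarrow> int" where
  "boundary0 xs w =
     (if 0 \<le> w \<and> w < int p then - int (xs ! nat w)
      else if w < 0 then N - 2 * int q + int (xs ! nat (-1 - w))
      else - int q)"

definition boundary :: "nat list \<Rightarrow> int \<Rightarrow> int" where
  "boundary xs i = boundary0 xs ((i + int p) mod M - int p) - ((i + int p) div M) * N"

definition module_of_list :: "nat list \<Rightarrow> int set" where
  "module_of_list xs = {x. \<exists>i j. x = i*N + j*M \<and> boundary xs i \<le> j}"

text \<open>Entry \<open>k\<close> counts the points \<open>j \<in> [-q, -1]\<close> of column \<open>k\<close>, i.e. it is \<open>-B k\<close>.\<close>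

definition list_of_module :: "int set \<Rightarrow> nat list" where
  "list_of_module E = map (\<lambda>k. card {j \<in> {- int q..-1}. int k * N + j*M \<in> E}) [0..<p]"

lemma list_of_module_nth:
  "k < p \<Longrightarrow> list_of_module E ! k = card {j \<in> {- int q..-1}. int k * N + j*M \<in> E}"
  unfolding list_of_module_def by simp

lemma boundary_window_shift:
  assumes "- int p \<le> w" "w < M - int p"
  shows "boundary xs (w + t*M) = boundary0 xs w - t*N"
proof -
  have eq: "w + t*M + int p = (w + int p) + t*M"
    by simp
  have "0 \<le> w + int p" "w + int p < M"
    using assms by auto
  then have "(w + t*M + int p) mod M = w + int p" "(w + t*M + int p) div M = t"
    unfolding eq using M_pos by (simp_all add: mod_pos_pos_trivial div_pos_pos_trivial)
  then show ?thesis
    unfolding boundary_def by simp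
qed

lemma window_decomp:
  obtains w t where "- int p \<le> w" "w < M - int p" "i = w + t*M"
proof -
  define w where "w = (i + int p) mod M - int p"
  have "i = w + ((i + int p) div M) * M"
    unfolding w_def by (metis add_diff_cancel diff_add_eq mod_div_mult_eq)
  moreover have "- int p \<le> w" "w < M - int p"
    unfolding w_def using M_pos by auto
  ultimately show thesis
    using that by blast
qed

lemma boundary_shift: "boundary xs (i + s*M) = boundary xs i - s*N"
proof -
  obtain w t where w: "- int p \<le> w" "w < M - int p" "i = w + t*M"
    by (rule window_decomp)
  have "boundary xs (i + s*M) = boundary xs (w + (t + s)*M)"
    using w(3) by (simp add: algebra_simps)
  also have "\<dots> = boundary0 xs w - (t + s)*N"
    by (rule boundary_window_shift[OF w(1,2)])
  also have "\<dots> = boundary xs i - s*N"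
    using boundary_window_shift[OF w(1,2)] w(3) by (simp add: algebra_simps)
  finally show ?thesis .
qed

lemma lincomb_mem_module_of_list_iff:
  "i*N + j*M \<in> module_of_list xs \<longleftrightarrow> boundary xs i \<le> j"
proof
  assume "i*N + j*M \<in> module_of_list xs"
  then obtain i' j' where eq: "i'*N + j'*M = i*N + j*M" and "boundary xs i' \<le> j'"
    unfolding module_of_list_def by auto
  have "M \<noteq> 0"
    using M_pos by simp
  then obtain s where "i = i' + s*M" "j = j' - s*N"
    using coprime_lincomb_eq[OF coprime_MN _ eq] by blast
  then show "boundary xs i \<le> j"
    using \<open>boundary xs i' \<le> j'\<close> boundary_shift by simp
qed (auto simp: module_of_list_def)

context
  fixes xs assumes xs: "xs \<in> bounded_sorted_lists p q"
begin

lemma xs_length: "length xs = p"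
  using xs unfolding bounded_sorted_lists_def by simp

lemma xs_nth_mono: "i \<le> j \<Longrightarrow> j < p \<Longrightarrow> xs ! i \<le> xs ! j"
  using xs unfolding bounded_sorted_lists_def by (auto simp: sorted_iff_nth_mono)

lemma xs_nth_le:
  assumes "i < p"
  shows "xs ! i \<le> q"
proof -
  have "xs ! i \<in> set xs"
    using assms xs_length by simp
  then show ?thesis
    using xs unfolding bounded_sorted_lists_def by auto
qed

lemma boundary0_antimono:
  assumes "- int p \<le> w" "w + 1 < M - int p"
  shows "boundary0 xs (w + 1) \<le> boundary0 xs w"
proof -
  consider "w + 1 < 0" | "w = -1" | "0 \<le> w" "w + 1 < int p" | "0 \<le> w" "int p \<le> w + 1"
    by linarith
  then show ?thesis
  proof cases
    case 1
    have "xs ! nat (-1 - (w + 1)) \<le> xs ! nat (-1 - w)"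
      using 1 assms by (intro xs_nth_mono) auto
    with 1 show ?thesis
      unfolding boundary0_def by auto
  next
    case 2
    then have "0 < p"
      using assms by auto
    with 2 show ?thesis
      using N_halves unfolding boundary0_def by auto
  next
    case 3
    have "xs ! nat w \<le> xs ! nat (w + 1)"
      using 3 by (intro xs_nth_mono) auto
    with 3 show ?thesis
      unfolding boundary0_def by (auto simp: nat_add_distrib)
  next
    case 4
    then have "w + 1 = int p"
      using assms M_halves by auto
    moreover have "xs ! nat w \<le> q"
      using 4 calculation by (intro xs_nth_le) auto
    ultimately show ?thesis
      using 4 unfolding boundary0_def by auto
  qed
qed

lemma boundary0_wrap: "boundary0 xs (- int p) - N \<le> boundary0 xs (M - int p - 1)"
proof (cases "p = 0")
  case True
  then have "M - int p - 1 = 0"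
    using M_halves M_pos by auto
  then show ?thesis
    using True N_pos unfolding boundary0_def by simp
next
  case False
  then have x: "xs ! (p - 1) \<le> q"
    by (intro xs_nth_le) simp
  have B: "boundary0 xs (- int p) = N - 2 * int q + int (xs ! (p - 1))"
    using False unfolding boundary0_def by (simp add: nat_diff_distrib)
  consider "M - int p - 1 = int p - 1" | "M - int p - 1 = int p"
    using M_halves by linarith
  then show ?thesis
  proof cases
    case 1
    then have "boundary0 xs (M - int p - 1) = - int (xs ! (p - 1))"
      using False unfolding boundary0_def by (simp add: nat_diff_distrib)
    with B x show ?thesis
      by simp
  next
    case 2
    then have "boundary0 xs (M - int p - 1) = - int q"
      unfolding boundary0_def by simp
    with B x show ?thesis
      by simp
  qed
qed

lemma boundary_antimono: "boundary xs (i + 1) \<le> boundary xs i"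
proof -
  obtain w t where w: "- int p \<le> w" "w < M - int p" "i = w + t*M"
    by (rule window_decomp)
  have Bi: "boundary xs i = boundary0 xs w - t*N"
    using boundary_window_shift[OF w(1,2)] w(3) by simp
  show ?thesis
  proof (cases "w + 1 < M - int p")
    case True
    then have "boundary xs (i + 1) = boundary0 xs (w + 1) - t*N"
      using boundary_window_shift[of "w + 1" xs t] w by (simp add: algebra_simps)
    with Bi show ?thesis
      using boundary0_antimono[OF w(1) True] by simp
  next
    case False
    then have wl: "w = M - int p - 1"
      using w(2) by simp
    then have "i + 1 = - int p + (t + 1)*M"
      using w(3) by (simp add: algebra_simps)
    then have "boundary xs (i + 1) = boundary0 xs (- int p) - (t + 1)*N"
      using boundary_window_shift[of "- int p" xs "t + 1"] M_pos by simp
    with Bi wl show ?thesis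
      using boundary0_wrap by (simp add: algebra_simps)
  qed
qed

lemma boundary_reflect: "boundary xs i + boundary xs (-1 - i) = N - 2 * int q"
proof -
  obtain w t where w: "- int p \<le> w" "w < M - int p" "i = w + t*M"
    by (rule window_decomp)
  have Bi: "boundary xs i = boundary0 xs w - t*N"
    using boundary_window_shift[OF w(1,2)] w(3) by simp
  show ?thesis
  proof (cases "w < int p")
    case True
    have "- int p \<le> -1 - w" "-1 - w < M - int p"
      using True w M_halves by auto
    from boundary_window_shift[OF this, of xs "- t"]
    have "boundary xs (-1 - i) = boundary0 xs (-1 - w) + t*N"
      using w(3) by (simp add: algebra_simps)
    with Bi True w(1) show ?thesis
      unfolding boundary0_def by auto
  next
    case False
    then have wp: "w = int p" "M = 2 * int p + 1"
      using w M_halves by auto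
    have "boundary xs (-1 - i) = boundary0 xs (int p) + (t + 1)*N"
      using boundary_window_shift[of "int p" xs "- t - 1"] w wp by (simp add: algebra_simps)
    with Bi wp show ?thesis
      unfolding boundary0_def by (simp add: algebra_simps)
  qed
qed

lemma module_of_list_mem_antisym_modules: "module_of_list xs \<in> antisym_modules standard_centre"
proof -
  have closed: "x + M \<in> module_of_list xs \<and> x + N \<in> module_of_list xs"
    if x: "x \<in> module_of_list xs" for x
  proof -
    obtain i j where ij: "x = i*N + j*M" "boundary xs i \<le> j"
      using x unfolding module_of_list_def by blast
    have "x + M = i*N + (j + 1)*M" "x + N = (i + 1)*N + j*M"
      using ij(1) by (simp_all add: algebra_simps)
    then show ?thesis
      using ij(2) boundary_antimono[of i] lincomb_mem_module_of_list_iff by auto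
  qed
  have "antisym_about standard_centre (module_of_list xs)"
    unfolding antisym_about_def
  proof
    fix x
    obtain i j where ij: "x = i*N + j*M"
      using coprime_lincomb_window[OF coprime_MN M_pos, where L = 0] by metis
    have "standard_centre - x = (-1 - i)*N + (N - 2 * int q - 1 - j)*M"
      unfolding standard_centre_def ij by (simp add: algebra_simps)
    then show "x \<in> module_of_list xs \<longleftrightarrow> standard_centre - x \<notin> module_of_list xs"
      using boundary_reflect[of i] ij lincomb_mem_module_of_list_iff by auto
  qed
  with closed show ?thesis
    unfolding antisym_modules_def by blast
qed

lemma list_of_module_of_list: "list_of_module (module_of_list xs) = xs"
proof (rule nth_equalityI)
  show "length (list_of_module (module_of_list xs)) = length xs"
    unfolding list_of_module_def using xs_length by simp
next
  fix k assume "k < length (list_of_module (module_of_list xs))"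
  then have k: "k < p"
    unfolding list_of_module_def by simp
  have "boundary xs (int k) = boundary0 xs (int k)"
    using boundary_window_shift[of "int k" xs 0] k M_halves by auto
  then have "boundary xs (int k) = - int (xs ! k)"
    using k unfolding boundary0_def by simp
  then have "{j \<in> {- int q..-1}. int k * N + j*M \<in> module_of_list xs} = {- int (xs ! k)..-1}"
    using xs_nth_le[OF k] lincomb_mem_module_of_list_iff by auto
  then show "list_of_module (module_of_list xs) ! k = xs ! k"
    using k by (simp add: list_of_module_nth)
qed

end

context
  fixes E assumes E: "E \<in> antisym_modules standard_centre"
begin

lemma lincomb_mem_mono:
  assumes "i*N + j*M \<in> E" "i \<le> i'" "j \<le> j'"
  shows "i'*N + j'*M \<in> E"
proof -
  have closed: "\<And>x. x \<in> E \<Longrightarrow> x + M \<in> E" "\<And>x. x \<in> E \<Longrightarrow> x + N \<in> E"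
    using E unfolding antisym_modules_def by auto
  from assms(3) have column: "i*N + j'*M \<in> E"
  proof (induction j' rule: int_ge_induct)
    case base
    show ?case
      by (fact assms(1))
  next
    case (step k)
    then have "(i*N + k*M) + M \<in> E"
      using closed(1) by blast
    then show ?case
      by (simp add: algebra_simps)
  qed
  from assms(2) show ?thesis
  proof (induction i' rule: int_ge_induct)
    case base
    show ?case
      by (fact column)
  next
    case (step k)
    then have "(k*N + j'*M) + N \<in> E"
      using closed(2) by blast
    then show ?case
      by (simp add: algebra_simps)
  qed
qed

lemma lincomb_mem_reflect:
  "i*N + j*M \<in> E \<longleftrightarrow> (-1 - i)*N + (N - 2 * int q - 1 - j)*M \<notin> E"
proof -
  have "standard_centre - (i*N + j*M) = (-1 - i)*N + (N - 2 * int q - 1 - j)*M"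
    unfolding standard_centre_def by (simp add: algebra_simps)
  moreover have "i*N + j*M \<in> E \<longleftrightarrow> standard_centre - (i*N + j*M) \<notin> E"
    using E unfolding antisym_modules_def antisym_about_def by blast
  ultimately show ?thesis
    by simp
qed

lemma column_bounds:
  assumes "0 \<le> i" "i < int p"
  shows "i*N \<in> E" "i*N + (- int q - 1)*M \<notin> E"
proof -
  show "i*N \<in> E"
  proof (rule ccontr)
    assume "i*N \<notin> E"
    then have "(-1 - i)*N + (N - 2 * int q - 1)*M \<in> E"
      using lincomb_mem_reflect[of i 0] by simp
    then have "i*N + 0*M \<in> E"
      by (rule lincomb_mem_mono) (use assms N_halves in auto)
    with \<open>i*N \<notin> E\<close> show False
      by simp
  qed
  show "i*N + (- int q - 1)*M \<notin> E"
  proof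
    assume low: "i*N + (- int q - 1)*M \<in> E"
    have "(M - 1 - i)*N + (- int q - 1)*M \<in> E"
      by (rule lincomb_mem_mono[OF low]) (use assms M_halves in auto)
    then have "(-1 - (M - 1 - i))*N + (N - 2 * int q - 1 - (- int q - 1))*M \<notin> E"
      using lincomb_mem_reflect by blast
    moreover have "(-1 - (M - 1 - i))*N + (N - 2 * int q - 1 - (- int q - 1))*M = i*N + (- int q)*M"
      by (simp add: algebra_simps)
    moreover have "i*N + (- int q)*M \<in> E"
      by (rule lincomb_mem_mono[OF low]) simp_all
    ultimately show False
      by simp
  qed
qed

lemma column_mem_iff:
  assumes "0 \<le> i" "i < int p"
  shows "i*N + j*M \<in> E \<longleftrightarrow> - int (card {k \<in> {- int q..-1}. i*N + k*M \<in> E}) \<le> j"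
proof (rule upward_closed_threshold[of "\<lambda>j. i*N + j*M \<in> E" q])
  show "i*N + (k + 1)*M \<in> E" if "i*N + k*M \<in> E" for k
    by (rule lincomb_mem_mono[OF that]) simp_all
  show "i*N + 0*M \<in> E"
    using column_bounds(1)[OF assms] by simp
  show "i*N + (- int q - 1)*M \<notin> E"
    by (rule column_bounds(2)[OF assms])
qed

lemma list_of_module_mem: "list_of_module E \<in> bounded_sorted_lists p q"
  unfolding bounded_sorted_lists_def
proof (intro CollectI conjI subsetI)
  show "length (list_of_module E) = p"
    unfolding list_of_module_def by simp
  show "sorted (list_of_module E)"
    unfolding sorted_iff_nth_mono
  proof (intro allI impI)
    fix i j assume ij: "i \<le> j" "j < length (list_of_module E)"
    then have "j < p"
      unfolding list_of_module_def by simp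
    have "int j * N + k*M \<in> E" if "int i * N + k*M \<in> E" for k
      by (rule lincomb_mem_mono[OF that]) (use ij(1) in simp_all)
    then have "{k \<in> {- int q..-1}. int i * N + k*M \<in> E} \<subseteq> {k \<in> {- int q..-1}. int j * N + k*M \<in> E}"
      by blast
    then have "card {k \<in> {- int q..-1}. int i * N + k*M \<in> E} \<le> card {k \<in> {- int q..-1}. int j * N + k*M \<in> E}"
      by (rule card_mono[rotated]) (auto intro: finite_subset[of _ "{- int q..-1}"])
    with \<open>j < p\<close> ij(1) show "list_of_module E ! i \<le> list_of_module E ! j"
      by (simp add: list_of_module_nth)
  qed
  fix x assume "x \<in> set (list_of_module E)"
  then obtain k where "k < p" "x = list_of_module E ! k"
    by (metis in_set_conv_nth \<open>length (list_of_module E) = p\<close>)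
  moreover have "card {j \<in> {- int q..-1}. int k * N + j*M \<in> E} \<le> card {- int q..-1}"
    by (rule card_mono) auto
  ultimately show "x \<in> {..q}"
    by (simp add: list_of_module_nth)
qed

text \<open>For odd \<open>m\<close> the reflection maps column \<open>p\<close> to column \<open>-1 - p = p - m\<close>, i.e. to itself.\<close>

lemma middle_column_mem_iff:
  assumes "M = 2 * int p + 1"
  shows "int p * N + j*M \<in> E \<longleftrightarrow> - int q \<le> j"
proof -
  have reflect: "int p * N + k*M \<in> E \<longleftrightarrow> int p * N + (- 2 * int q - 1 - k)*M \<notin> E" for k
  proof -
    have "(-1 - int p)*N + (N - 2 * int q - 1 - k)*M = int p * N + (- 2 * int q - 1 - k)*M"
      using assms by (simp add: algebra_simps)
    then show ?thesis
      using lincomb_mem_reflect[of "int p" k] by simp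
  qed
  show ?thesis
  proof
    assume mem: "int p * N + j*M \<in> E"
    show "- int q \<le> j"
    proof (rule ccontr)
      assume "\<not> - int q \<le> j"
      then have "int p * N + (- 2 * int q - 1 - j)*M \<in> E"
        by (intro lincomb_mem_mono[OF mem]) simp_all
      with reflect[of j] mem show False
        by simp
    qed
  next
    assume "- int q \<le> j"
    show "int p * N + j*M \<in> E"
    proof (rule ccontr)
      assume not_mem: "int p * N + j*M \<notin> E"
      then have "int p * N + (- 2 * int q - 1 - j)*M \<in> E"
        using reflect[of j] by simp
      then have "int p * N + j*M \<in> E"
        by (rule lincomb_mem_mono) (use \<open>- int q \<le> j\<close> in simp_all)
      with not_mem show False
        by simp
    qed
  qed
qed

lemma window_mem_iff:
  assumes "- int p \<le> w" "w < M - int p"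
  shows "w*N + j*M \<in> E \<longleftrightarrow> boundary0 (list_of_module E) w \<le> j"
proof -
  consider "0 \<le> w" "w < int p" | "w < 0" | "int p \<le> w"
    by linarith
  then show ?thesis
  proof cases
    case 1
    then show ?thesis
      using column_mem_iff[OF 1, of j] list_of_module_nth[of "nat w"] unfolding boundary0_def by simp
  next
    case 2
    have w': "0 \<le> -1 - w" "-1 - w < int p"
      using 2 assms by auto
    have "boundary0 (list_of_module E) w
        = N - 2 * int q + int (card {k \<in> {- int q..-1}. (-1 - w)*N + k*M \<in> E})"
      using 2 w' list_of_module_nth[of "nat (-1 - w)"] unfolding boundary0_def by simp
    with lincomb_mem_reflect[of w j] column_mem_iff[OF w', of "N - 2 * int q - 1 - j"]
    show ?thesis
      by auto
  next
    case 3
    then have "w = int p" "M = 2 * int p + 1"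
      using assms M_halves by auto
    then show ?thesis
      using middle_column_mem_iff unfolding boundary0_def by simp
  qed
qed

lemma module_of_list_of_module: "module_of_list (list_of_module E) = E"
proof (intro set_eqI)
  fix x
  obtain i j where ij: "x = i*N + j*M"
    using coprime_lincomb_window[OF coprime_MN M_pos, where L = 0] by metis
  obtain w t where w: "- int p \<le> w" "w < M - int p" "i = w + t*M"
    by (rule window_decomp)
  have "x \<in> module_of_list (list_of_module E) \<longleftrightarrow> boundary (list_of_module E) i \<le> j"
    unfolding ij by (rule lincomb_mem_module_of_list_iff)
  also have "\<dots> \<longleftrightarrow> boundary0 (list_of_module E) w \<le> j + t*N"
    unfolding w(3) boundary_window_shift[OF w(1,2)] by linarith
  also have "\<dots> \<longleftrightarrow> w*N + (j + t*N)*M \<in> E"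
    using window_mem_iff[OF w(1,2)] by simp
  also have "\<dots> \<longleftrightarrow> x \<in> E"
    unfolding ij w(3) by (simp add: algebra_simps)
  finally show "x \<in> module_of_list (list_of_module E) \<longleftrightarrow> x \<in> E" .
qed

end

lemma bij_betw_list_of_module:
  "bij_betw list_of_module (antisym_modules standard_centre) (bounded_sorted_lists p q)"
  by (rule bij_betw_byWitness[where f' = module_of_list])
    (auto simp: module_of_list_of_module list_of_module_of_list list_of_module_mem
      module_of_list_mem_antisym_modules)

lemma card_selfdual_semimodules: "card selfdual_semimodules = (p + q) choose p"
proof -
  have "card selfdual_semimodules = card (antisym_modules standard_centre)"
    using bij_betw_selfdual_antisym_modules[OF standard_centre_odd] by (rule bij_betw_same_card)
  also have "\<dots> = card (bounded_sorted_lists p q)"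
    using bij_betw_list_of_module by (rule bij_betw_same_card)
  also have "\<dots> = (p + q) choose p"
    by (rule card_bounded_sorted_lists)
  finally show ?thesis .
qed

end

theorem mainTheorem12:
  fixes m n :: nat
  assumes "0 < m" "0 < n" "coprime m n"
  shows "card {D. is_semimodule m n D \<and> zero_normalized D \<and> hat m n D = D}
         = (m div 2 + n div 2) choose (m div 2)"
proof -
  interpret coprime_gens m n
    using assms by unfold_locales
  show ?thesis
    using card_selfdual_semimodules unfolding selfdual_semimodules_def p_def q_def .
qed

end
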